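(* Let $n\ge2$ and let $\mathbb{A}=(A_{ij})_{i,j=1}^n$ be an operator matrix as in the context, and assume that $\mathbb{A}_k$ is closed for all $k\in\{2,\ldots,n\}$. If $\sigma(A_{kk})\cup\sigma(\mathbb{A}_k)\ne\mathbb{C}$ for all $k\in\{2,\ldots,n-1\}$, then $\sigma(\mathbb{A})\subset S_n(\mathbb{A})$.
   Context: Let $X_1,\ldots,X_n$ be complex Banach spaces and $X=X_1\times\cdots\times X_n$ with norm $\|x\|=\sum_i\|x_i\|_{X_i}$. For $i,j\in\{1,\ldots,n\}$, $A_{ij}:\mathcal{D}(A_{ij})\subset X_j\to X_i$ are linear operators with $A_{ii}$ closed and, for $i\ne j$, $A_{ij}$ relatively $A_{jj}$-bounded (i.e. $\mathcal{D}(A_{jj})\subset\mathcal{D}(A_{ij})$ and there are $\alpha,\beta\ge0$ with $\|A_{ij}x\|\le\alpha\|x\|+\beta\|A_{jj}x\|$ for $x\in\mathcal{D}(A_{jj})$). The operator matrix $\mathbb{A}=(A_{ij})$ acts on $\mathcal{D}(\mathbb{A})=\mathcal{D}(A_{11})\times\cdots\times\mathcal{D}(A_{nn})$ by $(\mathbb{A}x)_i=\sum_jA_{ij}x_j$. For $1\le k\le n$, $\mathbb{A}_k:=(A_{ij})_{i,j=1}^k$ acts on $X_1\times\cdots\times X_k$ with domain $\mathcal{D}(A_{11})\times\cdots\times\mathcal{D}(A_{kk})$. For a linear operator $S$ on a Banach space $Y$, $\sigma(S)$ is the set of $\lambda$ for which $\lambda-S:\mathcal{D}(S)\to Y$ is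 not bijective with bounded inverse. For $j\ne k$ and $\lambda\notin\sigma(A_{kk})\cup\sigma(A_{jj})$ set \[ \mathcal{R}_{kj}(\lambda):=\sum_{i=1,i\ne k}^n\Big\|\Big(A_{ik}(\lambda-A_{kk})^{-1}A_{kj}+(1-\delta_{ij})A_{ij}\Big)(\lambda-A_{jj})^{-1}\Big\|, \] ($\delta_{ij}$ the Kronecker delta, norms are operator norms $X_j\to X_i$), the Schur sets $S_{kj}(\mathbb{A}):=\sigma(A_{kk})\cup\sigma(A_{jj})\cup\{\lambda\in\mathbb{C}\setminus(\sigma(A_{kk})\cup\sigma(A_{jj})):\mathcal{R}_{kj}(\lambda)\ge1\}$, and $S_k(\mathbb{A}):=\bigcup_{j=1,j\ne k}^nS_{kj}(\mathbb{A})$. *)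

theory Defs
  imports "HOL-Analysis.Analysis"
begin

text \<open>A complex Banach space is modelled as a real Banach space of type 'a
  together with a complex structure J (multiplication by the imaginary unit)
  compatible with the norm.\<close>

definition cscale :: "('a::real_vector \<Rightarrow> 'a) \<Rightarrow> complex \<Rightarrow> 'a \<Rightarrow> 'a" where
  "cscale J c x = Re c *\<^sub>R x + Im c *\<^sub>R J x"

definition complex_structure :: "('a::real_normed_vector \<Rightarrow> 'a) \<Rightarrow> bool" where
  "complex_structure J \<longleftrightarrow> linear J \<and> (\<forall>x. J (J x) = - x) \<and>
     (\<forall>c x. norm (cscale J c x) = cmod c * norm x)"

definition csubspace :: "('a::real_vector \<Rightarrow> 'a) \<Rightarrow> 'a set \<Rightarrow> bool" where
  "csubspace J V \<longleftrightarrow> 0 \<in> V \<and> (\<forall>x\<in>V. \<forall>y\<in>V. x + y \<in> V) \<and> (\<forall>c. \<forall>x\<in>V. cscale J c x \<in> V)"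

definition cbanach :: "('a::banach \<Rightarrow> 'a) \<Rightarrow> 'a set \<Rightarrow> bool" where
  "cbanach J V \<longleftrightarrow> csubspace J V \<and> closed V"

definition lin_op :: "('a::real_vector \<Rightarrow> 'a) \<Rightarrow> 'a set \<Rightarrow> 'a set \<Rightarrow> 'a set \<Rightarrow> ('a \<Rightarrow> 'a) \<Rightarrow> bool" where
  "lin_op J Y Z D T \<longleftrightarrow> csubspace J D \<and> D \<subseteq> Y \<and> T ` D \<subseteq> Z \<and>
     (\<forall>x\<in>D. \<forall>y\<in>D. T (x + y) = T x + T y) \<and> (\<forall>c. \<forall>x\<in>D. T (cscale J c x) = cscale J c (T x))"

definition closed_op :: "'a set \<Rightarrow> ('a::real_normed_vector \<Rightarrow> 'a) \<Rightarrow> bool" where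
  "closed_op D T \<longleftrightarrow> (\<forall>s x y. (\<forall>m. s m \<in> D) \<and> s \<longlonglongrightarrow> x \<and> (\<lambda>m. T (s m)) \<longlonglongrightarrow> y
       \<longrightarrow> x \<in> D \<and> T x = y)"

definition rel_bounded :: "'a set \<Rightarrow> ('a::real_normed_vector \<Rightarrow> 'a) \<Rightarrow> 'a set \<Rightarrow> ('a \<Rightarrow> 'a) \<Rightarrow> bool" where
  "rel_bounded DB B D T \<longleftrightarrow> D \<subseteq> DB \<and>
     (\<exists>\<alpha> \<beta>. \<alpha> \<ge> 0 \<and> \<beta> \<ge> 0 \<and> (\<forall>x\<in>D. norm (B x) \<le> \<alpha> * norm x + \<beta> * norm (T x)))"

definition bdd_invertible :: "'v set \<Rightarrow> 'v set \<Rightarrow> ('v \<Rightarrow> 'v) \<Rightarrow> ('v \<Rightarrow> real) \<Rightarrow> bool" where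
  "bdd_invertible Y D T N \<longleftrightarrow> bij_betw T D Y \<and> (\<exists>C. \<forall>x\<in>D. N x \<le> C * N (T x))"

definition op_spectrum :: "('a::real_normed_vector \<Rightarrow> 'a) \<Rightarrow> 'a set \<Rightarrow> 'a set \<Rightarrow> ('a \<Rightarrow> 'a) \<Rightarrow> complex set" where
  "op_spectrum J Y D T = {l. \<not> bdd_invertible Y D (\<lambda>x. cscale J l x - T x) norm}"

definition resolvent :: "('a::real_normed_vector \<Rightarrow> 'a) \<Rightarrow> 'a set \<Rightarrow> ('a \<Rightarrow> 'a) \<Rightarrow> complex \<Rightarrow> 'a \<Rightarrow> 'a" where
  "resolvent J D T l y = (THE x. x \<in> D \<and> cscale J l x - T x = y)"

definition op_norm :: "'a set \<Rightarrow> ('a::real_normed_vector \<Rightarrow> 'a) \<Rightarrow> real" where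
  "op_norm Y T = Sup ((\<lambda>x. norm (T x)) ` {x \<in> Y. norm x \<le> 1})"

text \<open>Elements of X_1 \<times> ... \<times> X_k are represented as functions nat \<Rightarrow> 'a,
  with component i in X i for 1 \<le> i \<le> k and equal to 0 elsewhere.\<close>
definition prod_space :: "(nat \<Rightarrow> 'a::zero set) \<Rightarrow> nat \<Rightarrow> (nat \<Rightarrow> 'a) set" where
  "prod_space X k = {x. (\<forall>i\<in>{1..k}. x i \<in> X i) \<and> (\<forall>i. i \<notin> {1..k} \<longrightarrow> x i = 0)}"

definition prod_norm :: "nat \<Rightarrow> (nat \<Rightarrow> 'a::real_normed_vector) \<Rightarrow> real" where
  "prod_norm k x = (\<Sum>i=1..k. norm (x i))"

definition mat_op :: "nat \<Rightarrow> (nat \<Rightarrow> nat \<Rightarrow> 'a \<Rightarrow> 'a::real_vector) \<Rightarrow> (nat \<Rightarrow> 'a) \<Rightarrow> (nat \<Rightarrow> 'a)" where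
  "mat_op k A x = (\<lambda>i. if i \<in> {1..k} then (\<Sum>j=1..k. A i j (x j)) else 0)"

definition mat_dom :: "nat \<Rightarrow> (nat \<Rightarrow> nat \<Rightarrow> 'a set) \<Rightarrow> (nat \<Rightarrow> 'a::zero) set" where
  "mat_dom k D = prod_space (\<lambda>i. D i i) k"

text \<open>Closedness of A_k: graph closed in (X_1\<times>..\<times>X_k)^2 with the sum norm
  (convergence in the sum norm is componentwise convergence).\<close>
definition mat_closed :: "nat \<Rightarrow> (nat \<Rightarrow> nat \<Rightarrow> 'a set) \<Rightarrow> (nat \<Rightarrow> nat \<Rightarrow> 'a \<Rightarrow> 'a::real_normed_vector) \<Rightarrow> bool" where
  "mat_closed k D A \<longleftrightarrow> (\<forall>s x y. (\<forall>m. s m \<in> mat_dom k D) \<and>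
       (\<lambda>m. prod_norm k (\<lambda>i. s m i - x i)) \<longlonglongrightarrow> 0 \<and>
       (\<lambda>m. prod_norm k (\<lambda>i. mat_op k A (s m) i - y i)) \<longlonglongrightarrow> 0 \<and>
       (\<forall>i. i \<notin> {1..k} \<longrightarrow> x i = 0 \<and> y i = 0)
       \<longrightarrow> x \<in> mat_dom k D \<and> mat_op k A x = y)"

definition mat_spectrum :: "('a \<Rightarrow> 'a) \<Rightarrow> (nat \<Rightarrow> 'a set) \<Rightarrow> nat \<Rightarrow> (nat \<Rightarrow> nat \<Rightarrow> 'a set)
     \<Rightarrow> (nat \<Rightarrow> nat \<Rightarrow> 'a \<Rightarrow> 'a::real_normed_vector) \<Rightarrow> complex set" where
  "mat_spectrum J X k D A = {l. \<not> bdd_invertible (prod_space X k) (mat_dom k D)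
      (\<lambda>x. (\<lambda>i. if i \<in> {1..k} then cscale J l (x i) else 0) - mat_op k A x) (prod_norm k)}"

definition schur_R :: "('a \<Rightarrow> 'a) \<Rightarrow> (nat \<Rightarrow> 'a set) \<Rightarrow> nat \<Rightarrow> (nat \<Rightarrow> nat \<Rightarrow> 'a set)
     \<Rightarrow> (nat \<Rightarrow> nat \<Rightarrow> 'a \<Rightarrow> 'a::real_normed_vector) \<Rightarrow> nat \<Rightarrow> nat \<Rightarrow> complex \<Rightarrow> real" where
  "schur_R J X n D A k j l = (\<Sum>i\<in>{1..n} - {k}.
      op_norm (X j) (\<lambda>x. A i k (resolvent J (D k k) (A k k) l (A k j (resolvent J (D j j) (A j j) l x)))
                       + (if i = j then 0 else A i j (resolvent J (D j j) (A j j) l x))))"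

definition schur_set2 :: "('a \<Rightarrow> 'a) \<Rightarrow> (nat \<Rightarrow> 'a set) \<Rightarrow> nat \<Rightarrow> (nat \<Rightarrow> nat \<Rightarrow> 'a set)
     \<Rightarrow> (nat \<Rightarrow> nat \<Rightarrow> 'a \<Rightarrow> 'a::real_normed_vector) \<Rightarrow> nat \<Rightarrow> nat \<Rightarrow> complex set" where
  "schur_set2 J X n D A k j =
     op_spectrum J (X k) (D k k) (A k k) \<union> op_spectrum J (X j) (D j j) (A j j) \<union>
     {l. l \<notin> op_spectrum J (X k) (D k k) (A k k) \<union> op_spectrum J (X j) (D j j) (A j j) \<and>
         schur_R J X n D A k j l \<ge> 1}"

definition schur_set :: "('a \<Rightarrow> 'a) \<Rightarrow> (nat \<Rightarrow> 'a set) \<Rightarrow> nat \<Rightarrow> (nat \<Rightarrow> nat \<Rightarrow> 'a set)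
     \<Rightarrow> (nat \<Rightarrow> nat \<Rightarrow> 'a \<Rightarrow> 'a::real_normed_vector) \<Rightarrow> nat \<Rightarrow> complex set" where
  "schur_set J X n D A k = (\<Union>j\<in>{1..n} - {k}. schur_set2 J X n D A k j)"

definition op_matrix :: "('a \<Rightarrow> 'a) \<Rightarrow> (nat \<Rightarrow> 'a set) \<Rightarrow> nat \<Rightarrow> (nat \<Rightarrow> nat \<Rightarrow> 'a set)
     \<Rightarrow> (nat \<Rightarrow> nat \<Rightarrow> 'a \<Rightarrow> 'a::banach) \<Rightarrow> bool" where
  "op_matrix J X n D A \<longleftrightarrow> complex_structure J \<and> (\<forall>i\<in>{1..n}. cbanach J (X i)) \<and>
     (\<forall>i\<in>{1..n}. \<forall>j\<in>{1..n}. lin_op J (X j) (X i) (D i j) (A i j)) \<and>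
     (\<forall>i\<in>{1..n}. closed_op (D i i) (A i i)) \<and>
     (\<forall>i\<in>{1..n}. \<forall>j\<in>{1..n}. i \<noteq> j \<longrightarrow> rel_bounded (D i j) (A i j) (D j j) (A j j))"

end

theory Submission
  imports Defs
begin

text \<open>
  Let \<open>\<lambda> \<notin> S\<^sub>n(\<AA>)\<close>. Then every \<open>\<lambda> - A\<^sub>j\<^sub>j\<close> is invertible, and each
  \<open>A\<^sub>i\<^sub>j(\<lambda> - A\<^sub>j\<^sub>j)\<^sup>-\<^sup>1\<close> is bounded by relative boundedness. To solve \<open>(\<lambda> - \<AA>)x = z\<close>, eliminate the last
  component, \<open>x\<^sub>n = (\<lambda> - A\<^sub>n\<^sub>n)\<^sup>-\<^sup>1(z\<^sub>n + \<Sum>\<^sub>j\<^sub><\<^sub>n A\<^sub>n\<^sub>j x\<^sub>j)\<close>, and substitute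
  \<open>y\<^sub>j = (\<lambda> - A\<^sub>j\<^sub>j)x\<^sub>j\<close> for \<open>j < n\<close>. The system becomes a fixed point equation \<open>y = w(z) + K y\<close> on
  \<open>X\<^sub>1 \<times> \<dots> \<times> X\<^sub>n\<^sub>-\<^sub>1\<close> whose entries are
  \<open>K\<^sub>i\<^sub>j = (A\<^sub>i\<^sub>n(\<lambda> - A\<^sub>n\<^sub>n)\<^sup>-\<^sup>1A\<^sub>n\<^sub>j + (1 - \<delta>\<^sub>i\<^sub>j)A\<^sub>i\<^sub>j)(\<lambda> - A\<^sub>j\<^sub>j)\<^sup>-\<^sup>1\<close>. For the sum norm the
  column sums of \<open>\<parallel>K\<^sub>i\<^sub>j\<parallel>\<close> are exactly the numbers \<open>\<R>\<^sub>n\<^sub>j(\<lambda>) < 1\<close>, so \<open>K\<close> is a contraction: the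
  fixed point exists, is unique and depends boundedly on \<open>z\<close>, and hence \<open>\<lambda> - \<AA>\<close> is bijective
  with bounded inverse.
\<close>

lemma norm_le_prod_norm: "i \<in> {1..m} \<Longrightarrow> norm (u i) \<le> prod_norm m u"
  unfolding prod_norm_def by (intro member_le_sum) auto

lemma prod_norm_nonneg: "0 \<le> prod_norm m u"
  unfolding prod_norm_def by (intro sum_nonneg) auto

lemma prod_norm_triangle: "prod_norm m (\<lambda>i. a i + b i) \<le> prod_norm m a + prod_norm m b"
  unfolding prod_norm_def sum.distrib[symmetric] by (intro sum_mono norm_triangle_ineq)

lemma prod_norm_Suc: "prod_norm (Suc m) u = prod_norm m u + norm (u (Suc m))"
  by (simp add: prod_norm_def)

lemma prod_space_mem: "u \<in> prod_space Y m \<Longrightarrow> i \<in> {1..m} \<Longrightarrow> u i \<in> Y i"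
  by (simp add: prod_space_def)

lemma prod_space_outside: "u \<in> prod_space Y m \<Longrightarrow> i \<notin> {1..m} \<Longrightarrow> u i = 0"
  by (simp add: prod_space_def)

lemma prod_space_eqI:
  assumes "u \<in> prod_space Y m" "v \<in> prod_space Y m" "prod_norm m (u - v) = 0"
  shows "u = v"
proof
  fix i show "u i = v i"
  proof (cases "i \<in> {1..m}")
    case True
    then have "norm (u i - v i) \<le> 0" using norm_le_prod_norm[of i m "u - v"] assms(3) by simp
    then show ?thesis by simp
  qed (use prod_space_outside[OF assms(1)] prod_space_outside[OF assms(2)] in simp)
qed

lemma mat_dom_mem: "x \<in> mat_dom k D \<Longrightarrow> j \<in> {1..k} \<Longrightarrow> x j \<in> D j j"
  by (simp add: mat_dom_def prod_space_def)

lemma mat_dom_outside: "x \<in> mat_dom k D \<Longrightarrow> j \<notin> {1..k} \<Longrightarrow> x j = 0"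
  by (simp add: mat_dom_def prod_space_def)

section \<open>Contractions on product spaces\<close>

lemma convergent_geometric_increments:
  fixes s :: "nat \<Rightarrow> 'a::banach"
  assumes incr: "\<And>k. norm (s (Suc k) - s k) \<le> q ^ k * d" and q: "0 \<le> q" "q < 1"
  shows "convergent s"
proof -
  have "summable (\<lambda>k. q ^ k * d)"
    using summable_geometric[of q] q by (simp add: summable_mult2)
  then have "summable (\<lambda>k. s (Suc k) - s k)"
    by (rule summable_comparison_test[rotated]) (use incr in blast)
  then have lim: "(\<lambda>k. (\<Sum>j<k. s (Suc j) - s j) + s 0) \<longlonglongrightarrow> (\<Sum>k. s (Suc k) - s k) + s 0"
    by (intro tendsto_add summable_LIMSEQ) auto
  have "(\<lambda>k. (\<Sum>j<k. s (Suc j) - s j) + s 0) = s"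
  proof
    fix k show "(\<Sum>j<k. s (Suc j) - s j) + s 0 = s k"
      by (subst sum_lessThan_telescope) simp
  qed
  with lim show ?thesis by (auto intro: convergentI)
qed

lemma prod_norm_diff_triangle: "prod_norm m (u - w) \<le> prod_norm m (v - u) + prod_norm m (v - w)"
proof -
  have "norm (u i - w i) \<le> norm (v i - u i) + norm (v i - w i)" for i
    using dist_triangle3[of "u i" "w i" "v i"] by (simp add: dist_norm)
  then show ?thesis unfolding prod_norm_def sum.distrib[symmetric] by (intro sum_mono) simp
qed

lemma prod_space_limit_unique:
  assumes y: "y \<in> prod_space Y m" and v: "v \<in> prod_space Y m"
    and "(\<lambda>k. prod_norm m (t k - y)) \<longlonglongrightarrow> 0" "(\<lambda>k. prod_norm m (t k - v)) \<longlonglongrightarrow> 0"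
  shows "y = v"
proof (rule prod_space_eqI[OF y v])
  have "(\<lambda>k. prod_norm m (t k - y) + prod_norm m (t k - v)) \<longlonglongrightarrow> 0"
    using tendsto_add[OF assms(3,4)] by simp
  then have "prod_norm m (y - v) \<le> 0"
    by (rule LIMSEQ_le_const) (use prod_norm_diff_triangle in blast)
  then show "prod_norm m (y - v) = 0" using prod_norm_nonneg[of m "y - v"] by linarith
qed

lemma prod_space_geometric_limit:
  fixes s :: "nat \<Rightarrow> nat \<Rightarrow> 'a::banach"
  assumes closed: "\<forall>i\<in>{1..m}. closed (Y i)" and s_mem: "\<And>k. s k \<in> prod_space Y m"
    and incr: "\<And>k. prod_norm m (s (Suc k) - s k) \<le> q ^ k * d" and q: "0 \<le> q" "q < 1"
  obtains y where "y \<in> prod_space Y m" "(\<lambda>k. prod_norm m (s k - y)) \<longlonglongrightarrow> 0"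
proof -
  define y where "y i = (if i \<in> {1..m} then lim (\<lambda>k. s k i) else 0)" for i
  have s_lim: "(\<lambda>k. s k i) \<longlonglongrightarrow> y i" if i: "i \<in> {1..m}" for i
  proof -
    have "norm (s (Suc k) i - s k i) \<le> q ^ k * d" for k
      using norm_le_prod_norm[OF i, of "s (Suc k) - s k"] incr[of k] by simp
    then have "convergent (\<lambda>k. s k i)" by (rule convergent_geometric_increments[OF _ q])
    then show ?thesis using i by (simp add: y_def convergent_LIMSEQ_iff)
  qed
  have "y \<in> prod_space Y m"
    unfolding prod_space_def
  proof safe
    fix i assume i: "i \<in> {1..m}"
    show "y i \<in> Y i"
      by (rule closed_sequentially[OF _ _ s_lim[OF i]]) (use closed i prod_space_mem[OF s_mem i] in auto)
  qed (auto simp: y_def)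
  moreover have "(\<lambda>k. \<Sum>i=1..m. norm (s k i - y i)) \<longlonglongrightarrow> (\<Sum>i=1..m. 0)"
    by (intro tendsto_sum tendsto_norm_zero LIM_zero s_lim) auto
  then have "(\<lambda>k. prod_norm m (s k - y)) \<longlonglongrightarrow> 0" by (simp add: prod_norm_def)
  ultimately show ?thesis using that by blast
qed

lemma prod_space_contraction_fixpoint:
  fixes K :: "(nat \<Rightarrow> 'a::banach) \<Rightarrow> (nat \<Rightarrow> 'a)"
  assumes closed: "\<forall>i\<in>{1..m}. closed (Y i)"
    and add: "\<forall>i\<in>{1..m}. \<forall>a\<in>Y i. \<forall>b\<in>Y i. a + b \<in> Y i"
    and maps: "\<forall>u\<in>prod_space Y m. K u \<in> prod_space Y m"
    and contraction: "\<forall>u\<in>prod_space Y m. \<forall>v\<in>prod_space Y m.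
                        prod_norm m (K u - K v) \<le> q * prod_norm m (u - v)"
    and q: "0 \<le> q" "q < 1" and w: "w \<in> prod_space Y m"
  shows "\<exists>y\<in>prod_space Y m. y = (\<lambda>i. w i + K y i)"
proof -
  have step_mem: "(\<lambda>i. w i + K u i) \<in> prod_space Y m" if "u \<in> prod_space Y m" for u
    using maps that w add unfolding prod_space_def by auto
  have step_diff: "prod_norm m ((\<lambda>i. w i + K u i) - (\<lambda>i. w i + K v i)) \<le> q * prod_norm m (u - v)"
    if "u \<in> prod_space Y m" "v \<in> prod_space Y m" for u v
    using contraction that by (simp add: fun_diff_def)
  define s where "s k = ((\<lambda>y i. w i + K y i) ^^ k) w" for k
  have s_Suc: "s (Suc k) = (\<lambda>i. w i + K (s k) i)" for k by (simp add: s_def)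
  have s_mem: "s k \<in> prod_space Y m" for k
    by (induction k) (simp_all add: s_def w step_mem)
  have "prod_norm m (s (Suc k) - s k) \<le> q ^ k * prod_norm m (s 1 - s 0)" for k
  proof (induction k)
    case (Suc k)
    have "prod_norm m (s (Suc (Suc k)) - s (Suc k))
        = prod_norm m ((\<lambda>i. w i + K (s (Suc k)) i) - (\<lambda>i. w i + K (s k) i))"
      by (simp only: s_Suc)
    also have "\<dots> \<le> q * prod_norm m (s (Suc k) - s k)" by (rule step_diff[OF s_mem s_mem])
    also have "\<dots> \<le> q * (q ^ k * prod_norm m (s 1 - s 0))" by (rule mult_left_mono[OF Suc q(1)])
    finally show ?case by (simp only: power_Suc mult.assoc)
  qed simp
  then obtain y where y: "y \<in> prod_space Y m" and s_y: "(\<lambda>k. prod_norm m (s k - y)) \<longlonglongrightarrow> 0"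
    using prod_space_geometric_limit[where s = s, OF closed s_mem _ q] by blast
  define v where "v = (\<lambda>i. w i + K y i)"
  have v_mem: "v \<in> prod_space Y m" unfolding v_def by (rule step_mem[OF y])
  have "(\<lambda>k. prod_norm m (s (Suc k) - v)) \<longlonglongrightarrow> 0"
  proof (rule Lim_null_comparison)
    have "norm (prod_norm m (s (Suc k) - v)) \<le> q * prod_norm m (s k - y)" for k
      using step_diff[OF s_mem y, of k] prod_norm_nonneg[of m "s (Suc k) - v"] by (simp add: s_Suc v_def)
    then show "\<forall>\<^sub>F k in sequentially. norm (prod_norm m (s (Suc k) - v)) \<le> q * prod_norm m (s k - y)"
      by simp
    show "(\<lambda>k. q * prod_norm m (s k - y)) \<longlonglongrightarrow> 0"
      using tendsto_mult_right_zero[OF s_y] by simp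
  qed
  then have "y = v" by (rule prod_space_limit_unique[OF y v_mem LIMSEQ_Suc[OF s_y]])
  then show ?thesis using y unfolding v_def by (rule bexI)
qed

lemma prod_space_contraction_fixpoint_unique:
  assumes contraction: "prod_norm m (K y - K y') \<le> q * prod_norm m (y - y')" and "q < 1"
    and y: "y \<in> prod_space Y m" "y = (\<lambda>i. w i + K y i)"
    and y': "y' \<in> prod_space Y m" "y' = (\<lambda>i. w i + K y' i)"
  shows "y = y'"
proof (rule prod_space_eqI[OF y(1) y'(1)])
  have "y i - y' i = K y i - K y' i" for i
    using fun_cong[OF y(2), of i] fun_cong[OF y'(2), of i] by simp
  then have "y - y' = K y - K y'" by (simp add: fun_eq_iff)
  then have le: "prod_norm m (y - y') \<le> q * prod_norm m (y - y')" using contraction by simp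
  show "prod_norm m (y - y') = 0"
  proof (rule ccontr)
    assume "prod_norm m (y - y') \<noteq> 0"
    then have "0 < prod_norm m (y - y')" using prod_norm_nonneg[of m "y - y'"] by simp
    then have "q * prod_norm m (y - y') < 1 * prod_norm m (y - y')"
      using \<open>q < 1\<close> by (rule mult_strict_right_mono[rotated])
    then show False using le by simp
  qed
qed

lemma cscale_of_real: "cscale J (complex_of_real c) x = c *\<^sub>R x"
  by (simp add: cscale_def)

lemma cscale_add: "complex_structure J \<Longrightarrow> cscale J l (a + b) = cscale J l a + cscale J l b"
  by (simp add: complex_structure_def cscale_def linear_add scaleR_add_right)

lemma cscale_scaleR: "complex_structure J \<Longrightarrow> cscale J l (c *\<^sub>R a) = c *\<^sub>R cscale J l a"
  by (simp add: complex_structure_def cscale_def linear_scale scaleR_add_right mult.commute)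

lemma norm_cscale: "complex_structure J \<Longrightarrow> norm (cscale J l a) = cmod l * norm a"
  by (simp add: complex_structure_def)

lemma csubspace_zero: "csubspace J V \<Longrightarrow> 0 \<in> V"
  by (simp add: csubspace_def)

lemma csubspace_add: "csubspace J V \<Longrightarrow> a \<in> V \<Longrightarrow> b \<in> V \<Longrightarrow> a + b \<in> V"
  by (simp add: csubspace_def)

lemma csubspace_cscale: "csubspace J V \<Longrightarrow> a \<in> V \<Longrightarrow> cscale J c a \<in> V"
  by (simp add: csubspace_def)

lemma csubspace_scaleR: "csubspace J V \<Longrightarrow> a \<in> V \<Longrightarrow> c *\<^sub>R a \<in> V"
  using csubspace_cscale[of J V a "complex_of_real c"] by (simp add: cscale_of_real)

lemma csubspace_diff: "csubspace J V \<Longrightarrow> a \<in> V \<Longrightarrow> b \<in> V \<Longrightarrow> a - b \<in> V"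
  using csubspace_add[of J V a "(-1) *\<^sub>R b"] csubspace_scaleR[of J V b "-1"] by simp

lemma csubspace_sum: "csubspace J V \<Longrightarrow> (\<And>j. j \<in> S \<Longrightarrow> u j \<in> V) \<Longrightarrow> sum u S \<in> V"
  by (induction S rule: infinite_finite_induct) (auto simp: csubspace_zero csubspace_add)

lemma lin_op_scaleR:
  assumes "lin_op J Y Z D T" "x \<in> D" shows "T (c *\<^sub>R x) = c *\<^sub>R T x"
proof -
  have "T (cscale J (complex_of_real c) x) = cscale J (complex_of_real c) (T x)"
    using assms by (simp add: lin_op_def)
  then show ?thesis by (simp add: cscale_of_real)
qed

section \<open>Bounded operators on subspaces\<close>

definition bounded_op :: "'a set \<Rightarrow> 'b set \<Rightarrow> ('a::real_normed_vector \<Rightarrow> 'b::real_normed_vector) \<Rightarrow> bool"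
  where "bounded_op Y Z F \<longleftrightarrow> F ` Y \<subseteq> Z \<and> (\<forall>x\<in>Y. \<forall>y\<in>Y. F (x + y) = F x + F y) \<and>
          (\<forall>c. \<forall>x\<in>Y. F (c *\<^sub>R x) = c *\<^sub>R F x) \<and> (\<exists>M. \<forall>x\<in>Y. norm (F x) \<le> M * norm x)"

lemma bounded_opI:
  assumes "\<And>x. x \<in> Y \<Longrightarrow> F x \<in> Z" "\<And>x y. x \<in> Y \<Longrightarrow> y \<in> Y \<Longrightarrow> F (x + y) = F x + F y"
    "\<And>c x. x \<in> Y \<Longrightarrow> F (c *\<^sub>R x) = c *\<^sub>R F x" "\<And>x. x \<in> Y \<Longrightarrow> norm (F x) \<le> M * norm x"
  shows "bounded_op Y Z F"
  using assms unfolding bounded_op_def by blast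

lemma bounded_op_mem: "bounded_op Y Z F \<Longrightarrow> x \<in> Y \<Longrightarrow> F x \<in> Z"
  by (auto simp: bounded_op_def)

lemma bounded_op_add: "bounded_op Y Z F \<Longrightarrow> x \<in> Y \<Longrightarrow> y \<in> Y \<Longrightarrow> F (x + y) = F x + F y"
  by (simp add: bounded_op_def)

lemma bounded_op_scaleR: "bounded_op Y Z F \<Longrightarrow> x \<in> Y \<Longrightarrow> F (c *\<^sub>R x) = c *\<^sub>R F x"
  by (simp add: bounded_op_def)

lemma bounded_op_bound:
  assumes "bounded_op Y Z F" obtains M where "0 \<le> M" "\<And>x. x \<in> Y \<Longrightarrow> norm (F x) \<le> M * norm x"
proof -
  obtain M where M: "\<forall>x\<in>Y. norm (F x) \<le> M * norm x" using assms by (auto simp: bounded_op_def)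
  have "norm (F x) \<le> max M 0 * norm x" if "x \<in> Y" for x
  proof -
    have "norm (F x) \<le> M * norm x" using M that by blast
    also have "\<dots> \<le> max M 0 * norm x" by (intro mult_right_mono) auto
    finally show ?thesis .
  qed
  then show ?thesis using that[of "max M 0"] by simp
qed

lemma bounded_op_zero: "bounded_op Y Z F \<Longrightarrow> x \<in> Y \<Longrightarrow> F 0 = 0"
  using bounded_op_scaleR[of Y Z F x 0] by simp

lemma bounded_op_diff:
  "csubspace J Y \<Longrightarrow> bounded_op Y Z F \<Longrightarrow> x \<in> Y \<Longrightarrow> y \<in> Y \<Longrightarrow> F (x - y) = F x - F y"
  using bounded_op_add[of Y Z F x "(-1) *\<^sub>R y"] bounded_op_scaleR[of Y Z F y "-1"]
    csubspace_scaleR[of J Y y "-1"]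
  by simp

lemma bounded_op_sum:
  assumes Y: "csubspace J Y" and F: "bounded_op Y Z F" and u: "\<And>j. j \<in> S \<Longrightarrow> u j \<in> Y"
  shows "F (sum u S) = (\<Sum>j\<in>S. F (u j))"
  using u
proof (induction S rule: infinite_finite_induct)
  case (insert x S)
  then show ?case using bounded_op_add[OF F, of "u x" "sum u S"] csubspace_sum[OF Y, of S u] by simp
qed (use bounded_op_zero[OF F csubspace_zero[OF Y]] in auto)

lemma bounded_op_comp:
  assumes F: "bounded_op Y Z F" and G: "bounded_op Z W G"
  shows "bounded_op Y W (\<lambda>x. G (F x))"
proof -
  obtain M where M: "0 \<le> M" "\<And>x. x \<in> Y \<Longrightarrow> norm (F x) \<le> M * norm x" using bounded_op_bound[OF F] by blast
  obtain N where N: "0 \<le> N" "\<And>x. x \<in> Z \<Longrightarrow> norm (G x) \<le> N * norm x" using bounded_op_bound[OF G] by blast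
  show ?thesis
  proof (rule bounded_opI[where M = "N * M"])
    fix x assume x: "x \<in> Y"
    have "norm (G (F x)) \<le> N * norm (F x)" using N bounded_op_mem[OF F x] by blast
    also have "\<dots> \<le> N * (M * norm x)" using M x N by (intro mult_left_mono) auto
    finally show "norm (G (F x)) \<le> N * M * norm x" by simp
  qed (use F G in \<open>auto simp: bounded_op_mem bounded_op_add bounded_op_scaleR\<close>)
qed

lemma bounded_op_plus:
  assumes W: "csubspace J W" and F: "bounded_op Y W F" and G: "bounded_op Y W G"
  shows "bounded_op Y W (\<lambda>x. F x + G x)"
proof -
  obtain M where M: "0 \<le> M" "\<And>x. x \<in> Y \<Longrightarrow> norm (F x) \<le> M * norm x" using bounded_op_bound[OF F] by blast
  obtain N where N: "0 \<le> N" "\<And>x. x \<in> Y \<Longrightarrow> norm (G x) \<le> N * norm x" using bounded_op_bound[OF G] by blast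
  show ?thesis
  proof (rule bounded_opI[where M = "M + N"])
    fix x assume x: "x \<in> Y"
    have "norm (F x + G x) \<le> M * norm x + N * norm x"
      using M N x by (intro order_trans[OF norm_triangle_ineq] add_mono) auto
    then show "norm (F x + G x) \<le> (M + N) * norm x" by (simp add: distrib_right)
  qed (use F G W in \<open>auto simp: bounded_op_mem bounded_op_add bounded_op_scaleR csubspace_add
         scaleR_add_right\<close>)
qed

lemma bounded_op_zero_fun: "csubspace J W \<Longrightarrow> bounded_op Y W (\<lambda>x. 0)"
  by (rule bounded_opI[where M = 0]) (auto simp: csubspace_zero)

lemma norm_le_op_norm:
  assumes Y: "csubspace J Y" and F: "bounded_op Y Z F" and x: "x \<in> Y"
  shows "norm (F x) \<le> op_norm Y F * norm x"
proof (cases "x = 0")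
  case True then show ?thesis using bounded_op_zero[OF F x] by simp
next
  case False
  obtain M where M: "0 \<le> M" "\<And>x. x \<in> Y \<Longrightarrow> norm (F x) \<le> M * norm x" using bounded_op_bound[OF F] by blast
  have "norm (F u) \<le> M" if "u \<in> Y" "norm u \<le> 1" for u
    using M(2)[OF that(1)] mult_left_mono[OF that(2) M(1)] by simp
  then have bdd: "bdd_above ((\<lambda>x. norm (F x)) ` {x \<in> Y. norm x \<le> 1})"
    by (auto intro!: bdd_aboveI)
  define u where "u = (1 / norm x) *\<^sub>R x"
  have u: "u \<in> Y" "norm u \<le> 1" using csubspace_scaleR[OF Y x] False by (auto simp: u_def)
  have "norm (F u) \<le> op_norm Y F"
    unfolding op_norm_def by (rule cSup_upper[OF _ bdd]) (use u in auto)
  moreover have "norm (F u) = norm (F x) / norm x"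
    using bounded_op_scaleR[OF F x] by (simp add: u_def)
  ultimately show ?thesis using False by (simp add: divide_le_eq mult.commute)
qed

lemma bounded_op_common_bound:
  assumes S: "finite S" and F: "\<And>j. j \<in> S \<Longrightarrow> bounded_op (Y j) (Z j) (F j)"
  obtains M where "0 \<le> M" "\<And>j x. j \<in> S \<Longrightarrow> x \<in> Y j \<Longrightarrow> norm (F j x) \<le> M * norm x"
proof -
  have "\<forall>j\<in>S. \<exists>M. 0 \<le> M \<and> (\<forall>x\<in>Y j. norm (F j x) \<le> M * norm x)"
  proof
    fix j assume "j \<in> S"
    obtain M where "0 \<le> M" "\<And>x. x \<in> Y j \<Longrightarrow> norm (F j x) \<le> M * norm x"
      using bounded_op_bound[OF F[OF \<open>j \<in> S\<close>]] by blast
    then show "\<exists>M. 0 \<le> M \<and> (\<forall>x\<in>Y j. norm (F j x) \<le> M * norm x)" by blast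
  qed
  then obtain f where f: "\<forall>j\<in>S. 0 \<le> f j \<and> (\<forall>x\<in>Y j. norm (F j x) \<le> f j * norm x)"
    by (rule bchoice[THEN exE])
  show ?thesis
  proof (rule that[of "sum f S"])
    show "0 \<le> sum f S" by (rule sum_nonneg) (use f in blast)
    fix j x assume j: "j \<in> S" and x: "x \<in> Y j"
    have "norm (F j x) \<le> f j * norm x" using f j x by blast
    also have "\<dots> \<le> sum f S * norm x"
      by (rule mult_right_mono[OF member_le_sum[OF j _ S] norm_ge_zero]) (use f in blast)
    finally show "norm (F j x) \<le> sum f S * norm x" .
  qed
qed

section \<open>Resolvents\<close>

locale resolvable =
  fixes J :: "'a::banach \<Rightarrow> 'a" and Y D :: "'a set" and T :: "'a \<Rightarrow> 'a" and l :: complex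
  assumes complex_structure: "complex_structure J" and lin_op: "lin_op J Y Y D T"
    and invertible: "bdd_invertible Y D (\<lambda>x. cscale J l x - T x) norm"
begin

abbreviation R :: "'a \<Rightarrow> 'a" where "R \<equiv> resolvent J D T l"

lemma shift_inj: "inj_on (\<lambda>x. cscale J l x - T x) D"
  and shift_image: "(\<lambda>x. cscale J l x - T x) ` D = Y"
  using invertible by (simp_all add: bdd_invertible_def bij_betw_def)

lemma resolvent_mem_eq:
  assumes "y \<in> Y" shows "R y \<in> D \<and> cscale J l (R y) - T (R y) = y"
proof -
  obtain x where x: "x \<in> D" "cscale J l x - T x = y" using shift_image assms by blast
  have "R y = x" unfolding resolvent_def
  proof (rule the_equality)
    fix x' assume "x' \<in> D \<and> cscale J l x' - T x' = y"
    then show "x' = x" using inj_onD[OF shift_inj, of x' x] x by simp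
  qed (use x in simp)
  then show ?thesis using x by simp
qed

lemma resolvent_mem: "y \<in> Y \<Longrightarrow> R y \<in> D"
  using resolvent_mem_eq by blast

lemma resolvent_right_inverse: "y \<in> Y \<Longrightarrow> cscale J l (R y) - T (R y) = y"
  using resolvent_mem_eq by blast

lemma resolvent_left_inverse:
  assumes x: "x \<in> D" shows "R (cscale J l x - T x) = x"
proof -
  have y: "cscale J l x - T x \<in> Y" using shift_image x by blast
  show ?thesis
    using inj_onD[OF shift_inj _ resolvent_mem[OF y] x] resolvent_right_inverse[OF y] by simp
qed

lemma bounded_op_resolvent: "bounded_op Y D R"
proof -
  obtain C where C: "\<forall>x\<in>D. norm x \<le> C * norm (cscale J l x - T x)"
    using invertible by (auto simp: bdd_invertible_def)
  show ?thesis
  proof (rule bounded_opI[where M = C])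
    fix x y assume x: "x \<in> Y" and y: "y \<in> Y"
    have D: "R x + R y \<in> D"
      using lin_op csubspace_add[of J D, OF _ resolvent_mem[OF x] resolvent_mem[OF y]]
      by (simp add: lin_op_def)
    have "cscale J l (R x + R y) - T (R x + R y) = x + y"
      using lin_op resolvent_mem x y resolvent_right_inverse cscale_add[OF complex_structure]
      by (simp add: lin_op_def algebra_simps)
    then show "R (x + y) = R x + R y" using resolvent_left_inverse[OF D] by simp
  next
    fix c x assume x: "x \<in> Y"
    have D: "c *\<^sub>R R x \<in> D"
      using lin_op csubspace_scaleR[of J D, OF _ resolvent_mem[OF x]] by (simp add: lin_op_def)
    have "cscale J l (c *\<^sub>R R x) - T (c *\<^sub>R R x) = c *\<^sub>R x"
      using lin_op_scaleR[OF lin_op resolvent_mem[OF x]] resolvent_right_inverse[OF x]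
        cscale_scaleR[OF complex_structure] by (simp add: scaleR_diff_right[symmetric])
    then show "R (c *\<^sub>R x) = c *\<^sub>R R x" using resolvent_left_inverse[OF D] by simp
  next
    fix x assume x: "x \<in> Y"
    show "norm (R x) \<le> C * norm x"
      using bspec[OF C resolvent_mem[OF x]] resolvent_right_inverse[OF x] by simp
  qed (rule resolvent_mem)
qed

lemma bounded_op_comp_resolvent: "bounded_op Y Y (\<lambda>y. T (R y))"
proof -
  obtain C where C: "0 \<le> C" "\<And>x. x \<in> Y \<Longrightarrow> norm (R x) \<le> C * norm x"
    using bounded_op_bound[OF bounded_op_resolvent] by blast
  show ?thesis
  proof (rule bounded_opI[where M = "cmod l * C + 1"])
    fix x assume x: "x \<in> Y"
    show "T (R x) \<in> Y" using lin_op resolvent_mem[OF x] by (auto simp: lin_op_def)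
    have "T (R x) = cscale J l (R x) - x" using resolvent_right_inverse[OF x] by (simp add: algebra_simps)
    then have "norm (T (R x)) \<le> cmod l * norm (R x) + norm x"
      using norm_triangle_ineq4[of "cscale J l (R x)" x] norm_cscale[OF complex_structure] by simp
    also have "\<dots> \<le> cmod l * (C * norm x) + norm x" using C x by (intro add_mono mult_left_mono) auto
    finally show "norm (T (R x)) \<le> (cmod l * C + 1) * norm x" by (simp add: algebra_simps)
    fix c show "T (R (c *\<^sub>R x)) = c *\<^sub>R T (R x)"
      using bounded_op_scaleR[OF bounded_op_resolvent x] lin_op_scaleR[OF lin_op resolvent_mem[OF x]]
      by simp
  next
    fix x y assume x: "x \<in> Y" and y: "y \<in> Y"
    show "T (R (x + y)) = T (R x) + T (R y)"
      using bounded_op_add[OF bounded_op_resolvent x y] lin_op resolvent_mem[OF x] resolvent_mem[OF y]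
      by (simp add: lin_op_def)
  qed
qed

lemma bounded_op_rel_bounded_resolvent:
  assumes rb: "rel_bounded DB B D T" and B: "lin_op J W Z DB B"
  shows "bounded_op Y Z (\<lambda>y. B (R y))"
proof -
  obtain \<alpha> \<beta> where ab: "0 \<le> \<alpha>" "0 \<le> \<beta>" "\<forall>x\<in>D. norm (B x) \<le> \<alpha> * norm x + \<beta> * norm (T x)"
    and DB: "D \<subseteq> DB" using rb by (auto simp: rel_bounded_def)
  obtain C where C: "0 \<le> C" "\<And>x. x \<in> Y \<Longrightarrow> norm (R x) \<le> C * norm x"
    using bounded_op_bound[OF bounded_op_resolvent] by blast
  obtain E where E: "0 \<le> E" "\<And>x. x \<in> Y \<Longrightarrow> norm (T (R x)) \<le> E * norm x"
    using bounded_op_bound[OF bounded_op_comp_resolvent] by blast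
  show ?thesis
  proof (rule bounded_opI[where M = "\<alpha> * C + \<beta> * E"])
    fix x assume x: "x \<in> Y"
    have Rx: "R x \<in> DB" using resolvent_mem[OF x] DB by blast
    show "B (R x) \<in> Z" using B Rx by (auto simp: lin_op_def)
    have "norm (B (R x)) \<le> \<alpha> * norm (R x) + \<beta> * norm (T (R x))" using ab resolvent_mem[OF x] by blast
    also have "\<dots> \<le> \<alpha> * (C * norm x) + \<beta> * (E * norm x)"
      using C E ab x by (intro add_mono mult_left_mono) auto
    finally show "norm (B (R x)) \<le> (\<alpha> * C + \<beta> * E) * norm x" by (simp add: algebra_simps)
    fix c show "B (R (c *\<^sub>R x)) = c *\<^sub>R B (R x)"
      using bounded_op_scaleR[OF bounded_op_resolvent x] lin_op_scaleR[OF B Rx] by simp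
  next
    fix x y assume x: "x \<in> Y" and y: "y \<in> Y"
    show "B (R (x + y)) = B (R x) + B (R y)"
      using bounded_op_add[OF bounded_op_resolvent x y] B
        subsetD[OF DB resolvent_mem[OF x]] subsetD[OF DB resolvent_mem[OF y]]
      by (simp add: lin_op_def)
  qed
qed

end

section \<open>Inverting the shifted operator matrix outside the Schur set\<close>

locale schur_reduction =
  fixes J :: "'a::banach \<Rightarrow> 'a" and X :: "nat \<Rightarrow> 'a set" and m :: nat
    and D :: "nat \<Rightarrow> nat \<Rightarrow> 'a set" and A :: "nat \<Rightarrow> nat \<Rightarrow> 'a \<Rightarrow> 'a" and l :: complex
  assumes m_pos: "1 \<le> m"
    and op_matrix: "op_matrix J X (Suc m) D A"
    and outside_schur_set: "l \<notin> schur_set J X (Suc m) D A (Suc m)"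
begin

abbreviation n :: nat where "n \<equiv> Suc m"

lemma complex_structure: "complex_structure J"
  using op_matrix by (simp add: op_matrix_def)

lemma subspace: "i \<in> {1..n} \<Longrightarrow> csubspace J (X i)"
  and closed_space: "i \<in> {1..n} \<Longrightarrow> closed (X i)"
  using op_matrix by (auto simp: op_matrix_def cbanach_def)

lemma lin_op_entry: "i \<in> {1..n} \<Longrightarrow> j \<in> {1..n} \<Longrightarrow> lin_op J (X j) (X i) (D i j) (A i j)"
  using op_matrix by (simp add: op_matrix_def)

lemma rel_bounded_entry:
  "i \<in> {1..n} \<Longrightarrow> j \<in> {1..n} \<Longrightarrow> i \<noteq> j \<Longrightarrow> rel_bounded (D i j) (A i j) (D j j) (A j j)"
  using op_matrix by (simp add: op_matrix_def)

lemma diag_dom_subset: "j \<in> {1..n} \<Longrightarrow> D j j \<subseteq> X j"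
  using lin_op_entry[of j j] by (simp add: lin_op_def)

lemma entry_mem:
  assumes i: "i \<in> {1..n}" and j: "j \<in> {1..n}" and x: "x \<in> D j j"
  shows "A i j x \<in> X i"
proof -
  have "D j j \<subseteq> D i j"
  proof (cases "i = j")
    case False
    then show ?thesis using rel_bounded_entry[OF i j False] by (simp add: rel_bounded_def)
  qed simp
  then show ?thesis using lin_op_entry[OF i j] x by (auto simp: lin_op_def)
qed

lemma outside_spectra:
  assumes j: "j \<in> {1..m}"
  shows "l \<notin> op_spectrum J (X n) (D n n) (A n n)" "l \<notin> op_spectrum J (X j) (D j j) (A j j)"
    and "schur_R J X n D A n j l < 1"
proof -
  have "{1..n} - {n} = {1..m}" by auto
  then have "l \<notin> schur_set2 J X n D A n j"
    using outside_schur_set j unfolding schur_set_def by blast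
  then show "l \<notin> op_spectrum J (X n) (D n n) (A n n)" "l \<notin> op_spectrum J (X j) (D j j) (A j j)"
    and "schur_R J X n D A n j l < 1"
    by (auto simp: schur_set2_def not_le)
qed

lemma resolvable_diag:
  assumes j: "j \<in> {1..n}" shows "resolvable J (X j) (D j j) (A j j) l"
proof -
  have "l \<notin> op_spectrum J (X j) (D j j) (A j j)"
    using outside_spectra(1)[of 1] outside_spectra(2)[of j] m_pos j by (cases "j = n") auto
  then show ?thesis
    unfolding resolvable_def op_spectrum_def
    using complex_structure lin_op_entry[OF j j] by simp
qed

abbreviation R :: "nat \<Rightarrow> 'a \<Rightarrow> 'a" where "R j \<equiv> resolvent J (D j j) (A j j) l"

lemma R_mem: "j \<in> {1..n} \<Longrightarrow> y \<in> X j \<Longrightarrow> R j y \<in> D j j"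
  by (rule resolvable.resolvent_mem[OF resolvable_diag])

lemma R_right_inverse: "j \<in> {1..n} \<Longrightarrow> y \<in> X j \<Longrightarrow> cscale J l (R j y) - A j j (R j y) = y"
  by (rule resolvable.resolvent_right_inverse[OF resolvable_diag])

lemma R_left_inverse: "j \<in> {1..n} \<Longrightarrow> x \<in> D j j \<Longrightarrow> R j (cscale J l x - A j j x) = x"
  by (rule resolvable.resolvent_left_inverse[OF resolvable_diag])

lemma bounded_op_R: "j \<in> {1..n} \<Longrightarrow> bounded_op (X j) (D j j) (R j)"
  by (rule resolvable.bounded_op_resolvent[OF resolvable_diag])

lemma bounded_op_entry_R:
  assumes i: "i \<in> {1..n}" and j: "j \<in> {1..n}"
  shows "bounded_op (X j) (X i) (\<lambda>y. A i j (R j y))"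
proof (cases "i = j")
  case True
  then show ?thesis using resolvable.bounded_op_comp_resolvent[OF resolvable_diag[OF j]] by simp
next
  case False
  then show ?thesis
    by (rule resolvable.bounded_op_rel_bounded_resolvent[OF resolvable_diag[OF j]
          rel_bounded_entry[OF i j] lin_op_entry[OF i j]])
qed

lemma uniform_bound:
  obtains M where "0 \<le> M" "\<And>j y. j \<in> {1..n} \<Longrightarrow> y \<in> X j \<Longrightarrow> norm (R j y) \<le> M * norm y"
    "\<And>i j y. i \<in> {1..n} \<Longrightarrow> j \<in> {1..n} \<Longrightarrow> y \<in> X j \<Longrightarrow> norm (A i j (R j y)) \<le> M * norm y"
proof -
  obtain M1 where M1: "0 \<le> M1" "\<And>j y. j \<in> {1..n} \<Longrightarrow> y \<in> X j \<Longrightarrow> norm (R j y) \<le> M1 * norm y"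
    using bounded_op_common_bound[of "{1..n}" X "\<lambda>j. D j j" R] bounded_op_R by blast
  have "bounded_op (X (snd p)) (X (fst p)) (\<lambda>y. A (fst p) (snd p) (R (snd p) y))"
    if "p \<in> {1..n} \<times> {1..n}" for p
    using that bounded_op_entry_R[of "fst p" "snd p"] by (simp add: mem_Times_iff)
  then obtain M2 where M2: "0 \<le> M2" "\<And>p y. p \<in> {1..n} \<times> {1..n} \<Longrightarrow> y \<in> X (snd p) \<Longrightarrow>
      norm (A (fst p) (snd p) (R (snd p) y)) \<le> M2 * norm y"
    using bounded_op_common_bound[of "{1..n} \<times> {1..n}" "\<lambda>p. X (snd p)" "\<lambda>p. X (fst p)"
        "\<lambda>p y. A (fst p) (snd p) (R (snd p) y)"] by blast
  show ?thesis
  proof (rule that[of "M1 + M2"])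
    show "0 \<le> M1 + M2" using M1(1) M2(1) by simp
  next
    fix j y assume "j \<in> {1..n}" "y \<in> X j"
    then have "norm (R j y) \<le> M1 * norm y" by (rule M1(2))
    also have "\<dots> \<le> (M1 + M2) * norm y" using M2(1) by (intro mult_right_mono) auto
    finally show "norm (R j y) \<le> (M1 + M2) * norm y" .
  next
    fix i j y assume "i \<in> {1..n}" "j \<in> {1..n}" "y \<in> X j"
    then have "norm (A i j (R j y)) \<le> M2 * norm y" using M2(2)[of "(i, j)" y] by simp
    also have "\<dots> \<le> (M1 + M2) * norm y" using M1(1) by (intro mult_right_mono) auto
    finally show "norm (A i j (R j y)) \<le> (M1 + M2) * norm y" .
  qed
qed

definition schur_entry :: "nat \<Rightarrow> nat \<Rightarrow> 'a \<Rightarrow> 'a" where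
  "schur_entry i j x = A i n (R n (A n j (R j x))) + (if i = j then 0 else A i j (R j x))"

lemma bounded_op_schur_entry:
  assumes i: "i \<in> {1..m}" and j: "j \<in> {1..m}"
  shows "bounded_op (X j) (X i) (schur_entry i j)"
proof -
  have i': "i \<in> {1..n}" and j': "j \<in> {1..n}" using i j by auto
  have "bounded_op (X j) (X i) (\<lambda>x. A i n (R n (A n j (R j x))))"
    by (rule bounded_op_comp[OF bounded_op_entry_R[OF _ j'] bounded_op_entry_R[OF i']]) simp_all
  moreover have "bounded_op (X j) (X i) (\<lambda>x. if i = j then 0 else A i j (R j x))"
    using bounded_op_zero_fun[OF subspace[OF i']] bounded_op_entry_R[OF i' j'] by (cases "i = j") simp_all
  ultimately show ?thesis
    unfolding schur_entry_def by (rule bounded_op_plus[OF subspace[OF i']])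
qed

lemma schur_R_eq: "schur_R J X n D A n j l = (\<Sum>i=1..m. op_norm (X j) (schur_entry i j))"
proof -
  have "{1..n} - {n} = {1..m}" by auto
  then show ?thesis unfolding schur_R_def schur_entry_def[abs_def] by simp
qed

definition schur_rate :: real where
  "schur_rate = max 0 (Max ((\<lambda>j. schur_R J X n D A n j l) ` {1..m}))"

lemma schur_rate_nonneg: "0 \<le> schur_rate"
  by (simp add: schur_rate_def)

lemma schur_rate_less_1: "schur_rate < 1"
  using outside_spectra(3) m_pos by (auto simp: schur_rate_def Max_less_iff)

lemma schur_R_le_rate: "j \<in> {1..m} \<Longrightarrow> schur_R J X n D A n j l \<le> schur_rate"
  unfolding schur_rate_def by (rule max.coboundedI2, rule Max_ge) auto

lemma prod_space_diff: "u \<in> prod_space X m \<Longrightarrow> v \<in> prod_space X m \<Longrightarrow> u - v \<in> prod_space X m"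
  using subspace by (auto simp: prod_space_def intro!: csubspace_diff[of J])

lemma mat_op_schur_entry_mem:
  assumes u: "u \<in> prod_space X m" shows "mat_op m schur_entry u \<in> prod_space X m"
  unfolding prod_space_def mat_op_def
  using subspace bounded_op_mem[OF bounded_op_schur_entry] prod_space_mem[OF u]
  by (auto intro!: csubspace_sum[of J])

lemma prod_norm_mat_op_schur_entry_le:
  assumes u: "u \<in> prod_space X m"
  shows "prod_norm m (mat_op m schur_entry u) \<le> schur_rate * prod_norm m u"
proof -
  have "prod_norm m (mat_op m schur_entry u) = (\<Sum>i=1..m. norm (\<Sum>j=1..m. schur_entry i j (u j)))"
    unfolding prod_norm_def mat_op_def by simp
  also have "\<dots> \<le> (\<Sum>i=1..m. \<Sum>j=1..m. norm (schur_entry i j (u j)))"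
    by (intro sum_mono norm_sum)
  also have "\<dots> \<le> (\<Sum>i=1..m. \<Sum>j=1..m. op_norm (X j) (schur_entry i j) * norm (u j))"
    using subspace prod_space_mem[OF u]
    by (intro sum_mono norm_le_op_norm[of J, OF _ bounded_op_schur_entry]) auto
  also have "\<dots> = (\<Sum>j=1..m. schur_R J X n D A n j l * norm (u j))"
    unfolding schur_R_eq sum_distrib_right by (rule sum.swap)
  also have "\<dots> \<le> (\<Sum>j=1..m. schur_rate * norm (u j))"
    using schur_R_le_rate by (intro sum_mono mult_right_mono) auto
  finally show ?thesis by (simp add: prod_norm_def sum_distrib_left)
qed

lemma mat_op_schur_entry_diff:
  assumes u: "u \<in> prod_space X m" and v: "v \<in> prod_space X m"
  shows "mat_op m schur_entry u - mat_op m schur_entry v = mat_op m schur_entry (u - v)"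
proof
  fix i show "(mat_op m schur_entry u - mat_op m schur_entry v) i = mat_op m schur_entry (u - v) i"
  proof (cases "i \<in> {1..m}")
    case True
    have "schur_entry i j (u j) - schur_entry i j (v j) = schur_entry i j (u j - v j)" if "j \<in> {1..m}" for j
      using bounded_op_diff[OF subspace bounded_op_schur_entry[OF True that]]
        prod_space_mem[OF u that] prod_space_mem[OF v that] that by auto
    then have "(\<Sum>j=1..m. schur_entry i j (u j)) - (\<Sum>j=1..m. schur_entry i j (v j))
        = (\<Sum>j=1..m. schur_entry i j (u j - v j))"
      unfolding sum_subtractf[symmetric] by (rule sum.cong[OF refl])
    then show ?thesis using True by (simp add: mat_op_def)
  qed (simp add: mat_op_def del: atLeastAtMost_iff)
qed

lemma mat_op_schur_entry_contraction:
  "u \<in> prod_space X m \<Longrightarrow> v \<in> prod_space X m \<Longrightarrow>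
    prod_norm m (mat_op m schur_entry u - mat_op m schur_entry v) \<le> schur_rate * prod_norm m (u - v)"
  by (simp add: mat_op_schur_entry_diff prod_space_diff prod_norm_mat_op_schur_entry_le)

definition shifted :: "(nat \<Rightarrow> 'a) \<Rightarrow> nat \<Rightarrow> 'a" where
  "shifted x = (\<lambda>i. if i \<in> {1..n} then cscale J l (x i) else 0) - mat_op n A x"

definition shifted_diag :: "(nat \<Rightarrow> 'a) \<Rightarrow> nat \<Rightarrow> 'a" where
  "shifted_diag x = (\<lambda>j. if j \<in> {1..m} then cscale J l (x j) - A j j (x j) else 0)"

definition schur_rhs :: "(nat \<Rightarrow> 'a) \<Rightarrow> nat \<Rightarrow> 'a" where
  "schur_rhs z = (\<lambda>i. if i \<in> {1..m} then z i + A i n (R n (z n)) else 0)"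

lemma shifted_apply:
  "shifted x i = (if i \<in> {1..n} then cscale J l (x i) - (\<Sum>j=1..n. A i j (x j)) else 0)"
  by (simp add: shifted_def mat_op_def)

lemma shifted_mem:
  assumes x: "x \<in> mat_dom n D" shows "shifted x \<in> prod_space X n"
  unfolding prod_space_def
proof safe
  fix i assume i: "i \<in> {1..n}"
  have "cscale J l (x i) \<in> X i"
    using csubspace_cscale[OF subspace[OF i]] diag_dom_subset[OF i] mat_dom_mem[OF x i] by blast
  moreover have "(\<Sum>j=1..n. A i j (x j)) \<in> X i"
    using entry_mem[OF i _ mat_dom_mem[OF x]] by (intro csubspace_sum[OF subspace[OF i]]) auto
  ultimately show "shifted x i \<in> X i"
    using i csubspace_diff[OF subspace[OF i]] by (simp add: shifted_apply)
qed (auto simp: shifted_apply)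

lemma shifted_last: "shifted x n = cscale J l (x n) - A n n (x n) - (\<Sum>j=1..m. A n j (x j))"
  by (simp add: shifted_apply)

lemma shifted_upper:
  assumes i: "i \<in> {1..m}"
  shows "shifted x i = cscale J l (x i) - A i i (x i) - (\<Sum>j\<in>{1..m}-{i}. A i j (x j)) - A i n (x n)"
proof -
  have "(\<Sum>j=1..m. A i j (x j)) = A i i (x i) + (\<Sum>j\<in>{1..m}-{i}. A i j (x j))"
    by (rule sum.remove) (use i in auto)
  then show ?thesis using i by (simp add: shifted_apply algebra_simps)
qed

lemma shifted_diag_mem:
  assumes x: "x \<in> mat_dom n D" shows "shifted_diag x \<in> prod_space X m"
  unfolding prod_space_def
proof safe
  fix j assume j: "j \<in> {1..m}"
  then have j': "j \<in> {1..n}" by auto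
  have "cscale J l (x j) \<in> X j"
    using csubspace_cscale[OF subspace[OF j']] diag_dom_subset[OF j'] mat_dom_mem[OF x j'] by blast
  moreover have "A j j (x j) \<in> X j" using entry_mem[OF j' j' mat_dom_mem[OF x j']] .
  ultimately show "shifted_diag x j \<in> X j"
    using j csubspace_diff[OF subspace[OF j']] by (simp add: shifted_diag_def)
qed (auto simp: shifted_diag_def)

lemma R_shifted_diag: "x \<in> mat_dom n D \<Longrightarrow> j \<in> {1..m} \<Longrightarrow> R j (shifted_diag x j) = x j"
  using R_left_inverse[of j "x j"] mat_dom_mem[of x n D j] by (simp add: shifted_diag_def)

lemma R_shifted_last: "x \<in> mat_dom n D \<Longrightarrow> R n (shifted x n + (\<Sum>j=1..m. A n j (x j))) = x n"
  using R_left_inverse[of n "x n"] mat_dom_mem[of x n D n] by (simp add: shifted_last)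

lemma schur_rhs_mem:
  assumes z: "z \<in> prod_space X n" shows "schur_rhs z \<in> prod_space X m"
  unfolding prod_space_def
proof safe
  fix i assume i: "i \<in> {1..m}"
  then have i': "i \<in> {1..n}" by auto
  have "A i n (R n (z n)) \<in> X i"
    using bounded_op_mem[OF bounded_op_entry_R[OF i'] prod_space_mem[OF z]] by simp
  then show "schur_rhs z i \<in> X i"
    using i csubspace_add[OF subspace[OF i'] prod_space_mem[OF z i']] by (simp add: schur_rhs_def)
qed (auto simp: schur_rhs_def)

lemma mat_op_schur_entry_shifted_diag:
  assumes x: "x \<in> mat_dom n D" and i: "i \<in> {1..m}"
  shows "mat_op m schur_entry (shifted_diag x) i
    = (\<Sum>j=1..m. A i n (R n (A n j (x j)))) + (\<Sum>j\<in>{1..m}-{i}. A i j (x j))"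
proof -
  have "mat_op m schur_entry (shifted_diag x) i = (\<Sum>j=1..m. schur_entry i j (shifted_diag x j))"
    using i by (simp add: mat_op_def)
  also have "\<dots> = (\<Sum>j=1..m. A i n (R n (A n j (x j))) + (if i = j then 0 else A i j (x j)))"
    by (rule sum.cong) (simp_all add: schur_entry_def R_shifted_diag[OF x])
  also have "\<dots> = (\<Sum>j=1..m. A i n (R n (A n j (x j)))) + (\<Sum>j=1..m. if i = j then 0 else A i j (x j))"
    by (rule sum.distrib)
  also have "(\<Sum>j=1..m. if i = j then 0 else A i j (x j))
      = (\<Sum>j\<in>{1..m}-{i}. if i = j then 0 else A i j (x j))"
    using sum.remove[of "{1..m}" i "\<lambda>j. if i = j then 0 else A i j (x j)"] i by simp
  also have "\<dots> = (\<Sum>j\<in>{1..m}-{i}. A i j (x j))" by (rule sum.cong) auto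
  finally show ?thesis .
qed

lemma shifted_schur_identity:
  assumes x: "x \<in> mat_dom n D" and i: "i \<in> {1..m}"
  shows "shifted x i
    = shifted_diag x i - mat_op m schur_entry (shifted_diag x) i - A i n (R n (shifted x n))"
proof -
  have i': "i \<in> {1..n}" using i by auto
  have Xn: "csubspace J (X n)" by (rule subspace) simp
  have G: "bounded_op (X n) (X i) (\<lambda>v. A i n (R n v))" by (rule bounded_op_entry_R[OF i']) simp
  have z: "shifted x n \<in> X n" using prod_space_mem[OF shifted_mem[OF x]] by simp
  have col: "A n j (x j) \<in> X n" if "j \<in> {1..m}" for j
    using entry_mem[of n j "x j"] mat_dom_mem[OF x, of j] that by simp
  have sum: "A i n (R n (\<Sum>j=1..m. A n j (x j))) = (\<Sum>j=1..m. A i n (R n (A n j (x j))))"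
    by (rule bounded_op_sum[OF Xn G]) (rule col)
  have "A i n (x n) = A i n (R n (shifted x n + (\<Sum>j=1..m. A n j (x j))))"
    using R_shifted_last[OF x] by simp
  also have "\<dots> = A i n (R n (shifted x n)) + A i n (R n (\<Sum>j=1..m. A n j (x j)))"
    by (rule bounded_op_add[OF G z]) (use col in \<open>intro csubspace_sum[OF Xn]\<close>)
  also have "\<dots> = A i n (R n (shifted x n)) + (\<Sum>j=1..m. A i n (R n (A n j (x j))))"
    by (simp only: sum)
  finally have last_col: "A i n (x n) = \<dots>" .
  have diag: "shifted_diag x i = cscale J l (x i) - A i i (x i)"
    using i by (simp add: shifted_diag_def)
  show ?thesis
    unfolding shifted_upper[OF i, of x] mat_op_schur_entry_shifted_diag[OF x i] last_col diag
    by (simp add: algebra_simps)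
qed

lemma shifted_diag_fixpoint:
  assumes x: "x \<in> mat_dom n D"
  shows "shifted_diag x
    = (\<lambda>i. schur_rhs (shifted x) i + mat_op m schur_entry (shifted_diag x) i)"
proof
  fix i show "shifted_diag x i = schur_rhs (shifted x) i + mat_op m schur_entry (shifted_diag x) i"
  proof (cases "i \<in> {1..m}")
    case True
    then show ?thesis using shifted_schur_identity[OF x True] by (simp add: schur_rhs_def)
  qed (simp add: shifted_diag_def schur_rhs_def mat_op_def del: atLeastAtMost_iff)
qed

lemma shifted_inj: "inj_on shifted (mat_dom n D)"
proof (rule inj_onI)
  fix x x' assume x: "x \<in> mat_dom n D" and x': "x' \<in> mat_dom n D" and eq: "shifted x = shifted x'"
  have "shifted_diag x = shifted_diag x'"
  proof (rule prod_space_contraction_fixpoint_unique[where K = "mat_op m schur_entry"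
        and w = "schur_rhs (shifted x)", OF _ schur_rate_less_1
        shifted_diag_mem[OF x] shifted_diag_fixpoint[OF x] shifted_diag_mem[OF x']])
    show "prod_norm m (mat_op m schur_entry (shifted_diag x) - mat_op m schur_entry (shifted_diag x'))
        \<le> schur_rate * prod_norm m (shifted_diag x - shifted_diag x')"
      by (rule mat_op_schur_entry_contraction[OF shifted_diag_mem[OF x] shifted_diag_mem[OF x']])
    show "shifted_diag x' = (\<lambda>i. schur_rhs (shifted x) i + mat_op m schur_entry (shifted_diag x') i)"
      using shifted_diag_fixpoint[OF x'] unfolding eq .
  qed
  then have upper: "x j = x' j" if "j \<in> {1..m}" for j
    using R_shifted_diag[OF x that] R_shifted_diag[OF x' that] by simp
  show "x = x'"
  proof
    fix j
    consider "j \<in> {1..m}" | "j = n" | "j \<notin> {1..n}" by force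
    then show "x j = x' j"
    proof cases
      case 2
      have "(\<Sum>j=1..m. A n j (x j)) = (\<Sum>j=1..m. A n j (x' j))"
        by (rule sum.cong[OF refl]) (simp add: upper)
      then have "x n = R n (shifted x' n + (\<Sum>j=1..m. A n j (x' j)))"
        using R_shifted_last[OF x] eq by simp
      then show ?thesis using R_shifted_last[OF x'] 2 by simp
    qed (use upper mat_dom_outside[OF x] mat_dom_outside[OF x'] in auto)
  qed
qed

definition back_substitution :: "(nat \<Rightarrow> 'a) \<Rightarrow> (nat \<Rightarrow> 'a) \<Rightarrow> nat \<Rightarrow> 'a" where
  "back_substitution z y j =
    (if j \<in> {1..m} then R j (y j)
     else if j = n then R n (z n + (\<Sum>i=1..m. A n i (R i (y i)))) else 0)"

lemma back_substitution_mem: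
  assumes z: "z \<in> prod_space X n" and y: "y \<in> prod_space X m"
  shows "back_substitution z y \<in> mat_dom n D"
    and "shifted (back_substitution z y) n = z n"
    and "shifted_diag (back_substitution z y) = y"
proof -
  have Xn: "csubspace J (X n)" by (rule subspace) simp
  define v where "v = z n + (\<Sum>i=1..m. A n i (R i (y i)))"
  have v: "v \<in> X n"
    unfolding v_def using prod_space_mem[OF z, of n] bounded_op_mem[OF bounded_op_entry_R prod_space_mem[OF y]]
    by (intro csubspace_add[OF Xn] csubspace_sum[OF Xn]) auto
  have upper: "back_substitution z y j = R j (y j)" if "j \<in> {1..m}" for j
    using that by (simp add: back_substitution_def)
  have last: "back_substitution z y n = R n v"
    by (simp add: back_substitution_def v_def)
  have outside: "back_substitution z y j = 0" if "j \<notin> {1..n}" for j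
    using that by (auto simp: back_substitution_def)
  show "back_substitution z y \<in> mat_dom n D"
    unfolding mat_dom_def prod_space_def
  proof (intro CollectI conjI ballI allI impI)
    fix i assume "i \<in> {1..n}"
    then consider "i \<in> {1..m}" | "i = n" by force
    then show "back_substitution z y i \<in> D i i"
      by cases (simp_all add: upper last R_mem v prod_space_mem[OF y])
  qed (rule outside)
  have "(\<Sum>j=1..m. A n j (back_substitution z y j)) = (\<Sum>j=1..m. A n j (R j (y j)))"
    by (rule sum.cong) (simp_all add: upper)
  then show "shifted (back_substitution z y) n = z n"
    using R_right_inverse[of n v] v by (simp add: shifted_last last v_def)
  show "shifted_diag (back_substitution z y) = y"
  proof
    fix j show "shifted_diag (back_substitution z y) j = y j"
      using R_right_inverse[OF _ prod_space_mem[OF y]] prod_space_outside[OF y, of j] upper[of j]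
      by (simp add: shifted_diag_def)
  qed
qed

lemma shifted_back_substitution:
  assumes z: "z \<in> prod_space X n" and y: "y \<in> prod_space X m"
    and y_fix: "y = (\<lambda>i. schur_rhs z i + mat_op m schur_entry y i)"
  shows "shifted (back_substitution z y) = z"
proof
  fix i
  consider "i \<in> {1..m}" | "i = n" | "i \<notin> {1..n}" by force
  then show "shifted (back_substitution z y) i = z i"
  proof cases
    case 1
    have "y i = z i + A i n (R n (z n)) + mat_op m schur_entry y i"
      using fun_cong[OF y_fix, of i] 1 by (simp add: schur_rhs_def)
    then show ?thesis
      using shifted_schur_identity[OF back_substitution_mem(1)[OF z y] 1] back_substitution_mem(2,3)[OF z y]
      by simp
  qed (use back_substitution_mem(2)[OF z y] prod_space_outside[OF z] in \<open>auto simp: shifted_apply\<close>)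
qed

lemma shifted_surj:
  assumes z: "z \<in> prod_space X n" shows "z \<in> shifted ` mat_dom n D"
proof -
  have "\<exists>y\<in>prod_space X m. y = (\<lambda>i. schur_rhs z i + mat_op m schur_entry y i)"
  proof (rule prod_space_contraction_fixpoint)
    show "\<forall>i\<in>{1..m}. closed (X i)" using closed_space by simp
    show "\<forall>i\<in>{1..m}. \<forall>a\<in>X i. \<forall>b\<in>X i. a + b \<in> X i" by (auto intro: csubspace_add[OF subspace])
  qed (use mat_op_schur_entry_mem mat_op_schur_entry_contraction schur_rate_nonneg schur_rate_less_1
         schur_rhs_mem[OF z] in auto)
  then obtain y where y: "y \<in> prod_space X m"
    and y_fix: "y = (\<lambda>i. schur_rhs z i + mat_op m schur_entry y i)" by blast
  have "z = shifted (back_substitution z y)"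
    using shifted_back_substitution[OF z y y_fix] by simp
  then show ?thesis using back_substitution_mem(1)[OF z y] by (rule image_eqI)
qed

context
  fixes M :: real
  assumes bound_nonneg: "0 \<le> M"
    and R_bound: "\<And>j y. j \<in> {1..n} \<Longrightarrow> y \<in> X j \<Longrightarrow> norm (R j y) \<le> M * norm y"
    and entry_R_bound:
      "\<And>i j y. i \<in> {1..n} \<Longrightarrow> j \<in> {1..n} \<Longrightarrow> y \<in> X j \<Longrightarrow> norm (A i j (R j y)) \<le> M * norm y"
begin

lemma prod_norm_schur_rhs_le:
  assumes z: "z \<in> prod_space X n"
  shows "prod_norm m (schur_rhs z) \<le> (1 + real m * M) * prod_norm n z"
proof -
  have "prod_norm m (schur_rhs z) = (\<Sum>i=1..m. norm (z i + A i n (R n (z n))))"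
    unfolding prod_norm_def schur_rhs_def by (rule sum.cong) auto
  also have "\<dots> \<le> (\<Sum>i=1..m. norm (z i) + M * norm (z n))"
    using entry_R_bound prod_space_mem[OF z]
    by (intro sum_mono order_trans[OF norm_triangle_ineq] add_left_mono) auto
  also have "\<dots> = prod_norm m z + real m * (M * norm (z n))"
    by (simp add: sum.distrib prod_norm_def)
  also have "\<dots> \<le> prod_norm n z + real m * (M * prod_norm n z)"
    using prod_norm_Suc[of m z] norm_le_prod_norm[of n n z] bound_nonneg
    by (intro add_mono mult_left_mono) auto
  finally show ?thesis by (simp add: algebra_simps)
qed

lemma prod_norm_shifted_diag_le:
  assumes x: "x \<in> mat_dom n D"
  shows "prod_norm m (shifted_diag x) \<le> (1 + real m * M) / (1 - schur_rate) * prod_norm n (shifted x)"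
proof -
  have "prod_norm m (shifted_diag x)
      = prod_norm m (\<lambda>i. schur_rhs (shifted x) i + mat_op m schur_entry (shifted_diag x) i)"
    using arg_cong[OF shifted_diag_fixpoint[OF x], of "prod_norm m"] .
  also have "\<dots> \<le> prod_norm m (schur_rhs (shifted x)) + prod_norm m (mat_op m schur_entry (shifted_diag x))"
    by (rule prod_norm_triangle)
  also have "\<dots> \<le> (1 + real m * M) * prod_norm n (shifted x) + schur_rate * prod_norm m (shifted_diag x)"
    using prod_norm_schur_rhs_le[OF shifted_mem[OF x]]
      prod_norm_mat_op_schur_entry_le[OF shifted_diag_mem[OF x]] by (rule add_mono)
  finally show ?thesis
    using schur_rate_less_1 by (simp add: field_simps)
qed

lemma prod_norm_upper_le:
  assumes x: "x \<in> mat_dom n D" shows "prod_norm m x \<le> M * prod_norm m (shifted_diag x)"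
proof -
  have "prod_norm m x = (\<Sum>j=1..m. norm (R j (shifted_diag x j)))"
    unfolding prod_norm_def by (rule sum.cong) (simp_all add: R_shifted_diag[OF x])
  also have "\<dots> \<le> (\<Sum>j=1..m. M * norm (shifted_diag x j))"
    using R_bound prod_space_mem[OF shifted_diag_mem[OF x]] by (intro sum_mono) auto
  finally show ?thesis by (simp add: prod_norm_def sum_distrib_left)
qed

lemma norm_last_le:
  assumes x: "x \<in> mat_dom n D"
  shows "norm (x n) \<le> M * (prod_norm n (shifted x) + M * prod_norm m (shifted_diag x))"
proof -
  have Xn: "csubspace J (X n)" by (rule subspace) simp
  have col: "A n j (x j) \<in> X n" if "j \<in> {1..m}" for j
    using entry_mem[of n j "x j"] mat_dom_mem[OF x, of j] that by simp
  have "norm (\<Sum>j=1..m. A n j (x j)) \<le> (\<Sum>j=1..m. norm (A n j (R j (shifted_diag x j))))"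
    using R_shifted_diag[OF x] by (intro order_trans[OF norm_sum] sum_mono) simp
  also have "\<dots> \<le> (\<Sum>j=1..m. M * norm (shifted_diag x j))"
    using entry_R_bound prod_space_mem[OF shifted_diag_mem[OF x]] by (intro sum_mono) auto
  finally have sum_le: "norm (\<Sum>j=1..m. A n j (x j)) \<le> M * prod_norm m (shifted_diag x)"
    by (simp add: prod_norm_def sum_distrib_left)
  have "norm (x n) = norm (R n (shifted x n + (\<Sum>j=1..m. A n j (x j))))"
    using R_shifted_last[OF x] by simp
  also have "\<dots> \<le> M * norm (shifted x n + (\<Sum>j=1..m. A n j (x j)))"
    using prod_space_mem[OF shifted_mem[OF x], of n] col
    by (intro R_bound csubspace_add[OF Xn] csubspace_sum[OF Xn]) auto
  also have "\<dots> \<le> M * (prod_norm n (shifted x) + M * prod_norm m (shifted_diag x))"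
    using sum_le bound_nonneg norm_le_prod_norm[of n n "shifted x"]
    by (intro mult_left_mono order_trans[OF norm_triangle_ineq]) auto
  finally show ?thesis .
qed

end

lemma shifted_bounded_below: "\<exists>C. \<forall>x\<in>mat_dom n D. prod_norm n x \<le> C * prod_norm n (shifted x)"
proof -
  obtain M where M: "0 \<le> M" "\<And>j y. j \<in> {1..n} \<Longrightarrow> y \<in> X j \<Longrightarrow> norm (R j y) \<le> M * norm y"
    "\<And>i j y. i \<in> {1..n} \<Longrightarrow> j \<in> {1..n} \<Longrightarrow> y \<in> X j \<Longrightarrow> norm (A i j (R j y)) \<le> M * norm y"
    using uniform_bound by blast
  define c where "c = (1 + real m * M) / (1 - schur_rate)"
  have "prod_norm n x \<le> ((M + M * M) * c + M) * prod_norm n (shifted x)" if x: "x \<in> mat_dom n D" for x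
  proof -
    have diag: "prod_norm m (shifted_diag x) \<le> c * prod_norm n (shifted x)"
      unfolding c_def by (rule prod_norm_shifted_diag_le[OF M x])
    have "prod_norm n x = prod_norm m x + norm (x n)" by (rule prod_norm_Suc)
    also have "\<dots> \<le> M * prod_norm m (shifted_diag x)
        + M * (prod_norm n (shifted x) + M * prod_norm m (shifted_diag x))"
      by (rule add_mono[OF prod_norm_upper_le[OF M x] norm_last_le[OF M x]])
    also have "\<dots> = (M + M * M) * prod_norm m (shifted_diag x) + M * prod_norm n (shifted x)"
      by (simp add: algebra_simps)
    also have "\<dots> \<le> (M + M * M) * (c * prod_norm n (shifted x)) + M * prod_norm n (shifted x)"
      using diag M(1) by (intro add_right_mono mult_left_mono) auto
    finally show ?thesis by (simp add: algebra_simps)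
  qed
  then show ?thesis by blast
qed

lemma bdd_invertible_shifted: "bdd_invertible (prod_space X n) (mat_dom n D) shifted (prod_norm n)"
proof -
  have "shifted ` mat_dom n D = prod_space X n" using shifted_mem shifted_surj by blast
  then show ?thesis
    using shifted_inj shifted_bounded_below unfolding bdd_invertible_def bij_betw_def by blast
qed

lemma not_in_mat_spectrum: "l \<notin> mat_spectrum J X n D A"
  using bdd_invertible_shifted unfolding mat_spectrum_def shifted_def[abs_def] by simp

end

theorem theorem4p1:
  fixes J :: "'a::banach \<Rightarrow> 'a" and X :: "nat \<Rightarrow> 'a set" and n :: nat
    and D :: "nat \<Rightarrow> nat \<Rightarrow> 'a set" and A :: "nat \<Rightarrow> nat \<Rightarrow> 'a \<Rightarrow> 'a"
  assumes "n \<ge> 2"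
    and "op_matrix J X n D A"
    and "\<forall>k\<in>{2..n}. mat_closed k D A"
    and "\<forall>k\<in>{2..n-1}. op_spectrum J (X k) (D k k) (A k k) \<union> mat_spectrum J X k D A \<noteq> UNIV"
  shows "mat_spectrum J X n D A \<subseteq> schur_set J X n D A n"
proof
  fix l assume l: "l \<in> mat_spectrum J X n D A"
  define m where "m = n - 1"
  have n: "n = Suc m" and m: "1 \<le> m" using assms(1) by (simp_all add: m_def)
  show "l \<in> schur_set J X n D A n"
  proof (rule ccontr)
    assume "l \<notin> schur_set J X n D A n"
    then have "schur_reduction J X m D A l"
      using m assms(2) unfolding n by (simp add: schur_reduction_def)
    then show False using schur_reduction.not_in_mat_spectrum l unfolding n by blast
  qed
qed

end
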